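(* Let $k\in\mathbb Z_{\ge1}$. With probability $1-\mathrm{negl}(n)$ over $G\sim G(n,1/2)$ the following holds: for every vertex set $S\subseteq[n]$ of size $k$ and every family $\mathcal C\subseteq\{C:\emptyset\ne C\subseteq S\}$ there exists a vertex $v\notin S$ such that for every $\emptyset\ne C\subseteq S$, we have $C\in\mathcal C$ if and only if the number of vertices that are adjacent to every vertex in $\{v\}\cup C$ is odd.
   Context: $G(n,1/2)$ is the uniform distribution over simple graphs on vertex set $[n]$ (each pair an edge independently with probability $1/2$). A function is negligible ($\mathrm{negl}(n)$) if eventually below $1/p(n)$ in absolute value for every polynomial $p$. *)

theory Defs
  imports Complex_Main
begin

text \<open>Simple graphs on vertex set [n], represented as {0..<n}: a graph is its edge set,
  a set of 2-element subsets of the vertex set.\<close>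
definition all_graphs :: "nat \<Rightarrow> nat set set set" where
  "all_graphs n = Pow {e. e \<subseteq> {..<n} \<and> card e = 2}"

text \<open>Probability of an event under G(n,1/2), i.e. the uniform distribution on all_graphs n.\<close>
definition prob_G :: "nat \<Rightarrow> (nat set set \<Rightarrow> bool) \<Rightarrow> real" where
  "prob_G n P = real (card {E \<in> all_graphs n. P E}) / real (card (all_graphs n))"

text \<open>Negligible functions: eventually below 1/p(n) for every polynomial p;
  equivalently (standard form) eventually below n^(-c) for every c.\<close>
definition negl :: "(nat \<Rightarrow> real) \<Rightarrow> bool" where
  "negl f \<longleftrightarrow> (\<forall>c::nat. \<forall>\<^sub>F n in sequentially. \<bar>f n\<bar> < 1 / real n ^ c)"

definition common_nbrs :: "nat \<Rightarrow> nat set set \<Rightarrow> nat set \<Rightarrow> nat" where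
  "common_nbrs n E A = card {w \<in> {..<n}. \<forall>x\<in>A. {w, x} \<in> E}"

definition good_graph :: "nat \<Rightarrow> nat \<Rightarrow> nat set set \<Rightarrow> bool" where
  "good_graph k n E \<longleftrightarrow>
     (\<forall>S. S \<subseteq> {..<n} \<and> card S = k \<longrightarrow>
       (\<forall>\<C>. \<C> \<subseteq> {C. C \<noteq> {} \<and> C \<subseteq> S} \<longrightarrow>
         (\<exists>v\<in>{..<n}. v \<notin> S \<and>
            (\<forall>C. C \<noteq> {} \<and> C \<subseteq> S \<longrightarrow> (C \<in> \<C> \<longleftrightarrow> odd (common_nbrs n E (insert v C)))))))"

end

theory Submission
  imports Defs "HOL-Library.Disjoint_Sets"
begin

text \<open>
  Fix \<open>S\<close> with \<open>|S| = k\<close>, a family \<open>\<C>\<close> of nonempty subsets of \<open>S\<close>, and split the other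
  vertices into halves \<open>A\<close> and \<open>B\<close>. Except with probability \<open>2^k (1 - 2^-k)^|B|\<close>, every
  nonempty \<open>T \<subseteq> S\<close> is the neighbourhood in \<open>S\<close> of some representative \<open>w_T \<in> B\<close>. Joining
  \<open>v \<in> A\<close> to the representatives of the types in a set \<open>\<T>\<close> adds \<open>#{T \<in> \<T>. C \<subseteq> T}\<close> common
  neighbours to \<open>v \<union> C\<close>; as this zeta transform is invertible over GF(2), some \<open>\<T>\<close> gives
  every \<open>v \<union> C\<close> the parity prescribed by \<open>\<C>\<close>, whatever the other edges are. So each
  \<open>v \<in> A\<close> fails with probability at most \<open>1 - 2^-2^k\<close>, independently for different \<open>v\<close>,
  whose edges to \<open>B\<close> are disjoint. A union bound over \<open>S\<close>, \<open>T\<close> and \<open>\<C>\<close> bounds the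
  failure probability by \<open>C(n,k) (2^k + 2^2^k) (1 - 2^-2^k)^((n-k)/2)\<close>, which is negligible.
\<close>

section \<open>Parity of up-set counts\<close>

lemma even_card_odd_values_iff:
  assumes "finite X"
  shows "even (card {x\<in>X. odd (f x :: nat)}) \<longleftrightarrow> even (\<Sum>x\<in>X. f x)"
  using assms
proof (induction X rule: finite_induct)
  case (insert x X)
  have "{y\<in>insert x X. odd (f y)} = (if odd (f x) then insert x {y\<in>X. odd (f y)} else {y\<in>X. odd (f y)})"
    by auto
  then show ?case using insert by auto
qed simp

lemma card_supersets_within:
  assumes "finite U" "C \<subseteq> U"
  shows "card {T. C \<subseteq> T \<and> T \<subseteq> U} = 2 ^ card (U - C)"
proof -
  have "{T. C \<subseteq> T \<and> T \<subseteq> U} = (\<lambda>X. X \<union> C) ` Pow (U - C)"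
    using assms by (auto intro!: image_eqI[where x = "_ - C"])
  moreover have "inj_on (\<lambda>X. X \<union> C) (Pow (U - C))"
    by (rule inj_onI) blast
  ultimately show ?thesis using assms by (simp add: card_image card_Pow)
qed

lemma card_nonempty_subsets:
  assumes "finite S"
  shows "card {C. C \<noteq> {} \<and> C \<subseteq> S} = 2 ^ card S - 1"
proof -
  have "{C. C \<noteq> {} \<and> C \<subseteq> S} = Pow S - {{}}" by blast
  then show ?thesis using assms by (simp add: card_Pow)
qed

text \<open>Over GF(2) the zeta transform of the Boolean lattice, \<open>D \<mapsto> (T \<mapsto> #{U \<in> D. T \<subseteq> U})\<close>,
  is an involution.\<close>
lemma odd_card_Moebius_inversion:
  assumes S: "finite S" and D: "D \<subseteq> Pow S" and C: "C \<subseteq> S"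
  shows "odd (card {T. T \<subseteq> S \<and> C \<subseteq> T \<and> odd (card {U\<in>D. T \<subseteq> U})}) \<longleftrightarrow> C \<in> D"
proof -
  define A where "A = {T. T \<subseteq> S \<and> C \<subseteq> T}"
  have fin: "finite A" "finite D"
    using S D unfolding A_def by (auto intro: finite_subset[of _ "Pow S"])
  have up: "card {T\<in>A. T \<subseteq> U} = (if C \<subseteq> U then 2 ^ card (U - C) else 0)" if "U \<in> D" for U
  proof -
    have "U \<subseteq> S" using that D by auto
    then have "{T\<in>A. T \<subseteq> U} = (if C \<subseteq> U then {T. C \<subseteq> T \<and> T \<subseteq> U} else {})"
      unfolding A_def by auto
    then show ?thesis using that D S by (auto simp: card_supersets_within finite_subset)
  qed
  have odd_up: "odd (card {T\<in>A. T \<subseteq> U}) \<longleftrightarrow> U = C" if "U \<in> D" for U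
  proof -
    have "finite U" "U \<subseteq> S" using that D S by (auto intro: finite_subset)
    then show ?thesis
      unfolding up[OF that] by (auto simp: even_power card_eq_0_iff)
  qed
  have "odd (card {T\<in>A. odd (card {U\<in>D. T \<subseteq> U})}) \<longleftrightarrow> odd (\<Sum>T\<in>A. card {U\<in>D. T \<subseteq> U})"
    using fin by (simp add: even_card_odd_values_iff)
  also have "(\<Sum>T\<in>A. card {U\<in>D. T \<subseteq> U}) = (\<Sum>U\<in>D. card {T\<in>A. T \<subseteq> U})"
    using sum.swap_restrict[OF fin, of "\<lambda>_ _. 1::nat" "\<lambda>T U. T \<subseteq> U"] by simp
  also have "odd \<dots> \<longleftrightarrow> odd (card {U\<in>D. odd (card {T\<in>A. T \<subseteq> U})})"
    using fin by (simp add: even_card_odd_values_iff)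
  also have "{U\<in>D. odd (card {T\<in>A. T \<subseteq> U})} = D \<inter> {C}"
    using odd_up by blast
  finally show ?thesis unfolding A_def by (cases "C \<in> D") auto
qed

lemma parity_system_solvable:
  assumes "finite S"
  shows "\<exists>\<T>\<subseteq>{T. T \<noteq> {} \<and> T \<subseteq> S}. \<forall>C. C \<noteq> {} \<and> C \<subseteq> S \<longrightarrow>
           (C \<in> \<F> \<longleftrightarrow> odd (a C + card {T\<in>\<T>. C \<subseteq> T}))"
proof -
  define D where "D = {C. C \<noteq> {} \<and> C \<subseteq> S \<and> (C \<in> \<F> \<longleftrightarrow> even (a C))}"
  define \<T> where "\<T> = {T. T \<noteq> {} \<and> T \<subseteq> S \<and> odd (card {U\<in>D. T \<subseteq> U})}"
  have "C \<in> \<F> \<longleftrightarrow> odd (a C + card {T\<in>\<T>. C \<subseteq> T})" if "C \<noteq> {}" "C \<subseteq> S" for C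
  proof -
    have "{T\<in>\<T>. C \<subseteq> T} = {T. T \<subseteq> S \<and> C \<subseteq> T \<and> odd (card {U\<in>D. T \<subseteq> U})}"
      unfolding \<T>_def using that by auto
    then have "odd (card {T\<in>\<T>. C \<subseteq> T}) \<longleftrightarrow> C \<in> D"
      using odd_card_Moebius_inversion[OF assms _ that(2), of D] by (auto simp: D_def)
    then show ?thesis using that by (auto simp: D_def)
  qed
  then show ?thesis by (intro exI[of _ \<T>]) (auto simp: \<T>_def)
qed

section \<open>Counting with independent blocks\<close>

definition determined_outside :: "'a set \<Rightarrow> ('a set \<Rightarrow> bool) \<Rightarrow> bool" where
  "determined_outside R P \<longleftrightarrow> (\<forall>E E'. E - R = E' - R \<longrightarrow> P E = P E')"

lemma determined_outside_mono:
  assumes "determined_outside R P" "R' \<subseteq> R"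
  shows "determined_outside R' P"
  unfolding determined_outside_def
proof (intro allI impI)
  fix E E' :: "'a set" assume "E - R' = E' - R'"
  then have "E - R = E' - R" using assms(2) by blast
  then show "P E = P E'" using assms(1) unfolding determined_outside_def by blast
qed

lemma determined_outside_Un:
  assumes "determined_outside R P" "X \<subseteq> R"
  shows "P (E \<union> X) = P E"
proof -
  have "(E \<union> X) - R = E - R" using assms(2) by blast
  then show ?thesis using assms(1) unfolding determined_outside_def by blast
qed

lemma card_Pow_eq_sum_fibers:
  assumes "finite U" "D \<subseteq> U"
  shows "card {E\<in>Pow U. \<Phi> E} = (\<Sum>E0\<in>Pow (U - D). card {X\<in>Pow D. \<Phi> (E0 \<union> X)})"
proof -
  define \<Sigma> where "\<Sigma> = Sigma (Pow (U - D)) (\<lambda>E0. {X\<in>Pow D. \<Phi> (E0 \<union> X)})"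
  have "{E\<in>Pow U. \<Phi> E} = (\<lambda>(E0, X). E0 \<union> X) ` \<Sigma>"
  proof
    show "{E\<in>Pow U. \<Phi> E} \<subseteq> (\<lambda>(E0, X). E0 \<union> X) ` \<Sigma>"
    proof
      fix E assume "E \<in> {E\<in>Pow U. \<Phi> E}"
      then have "(E - D, E \<inter> D) \<in> \<Sigma>" unfolding \<Sigma>_def by (auto simp: Un_Diff_Int)
      then show "E \<in> (\<lambda>(E0, X). E0 \<union> X) ` \<Sigma>" by (rule rev_image_eqI) auto
    qed
  qed (use assms(2) in \<open>auto simp: \<Sigma>_def\<close>)
  moreover have "inj_on (\<lambda>(E0, X). E0 \<union> X) \<Sigma>"
    unfolding inj_on_def
  proof clarify
    fix E0 X E0' X' assume "(E0, X) \<in> \<Sigma>" "(E0', X') \<in> \<Sigma>" and eq: "E0 \<union> X = E0' \<union> X'"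
    then have "E0 = (E0 \<union> X) - D" "X = (E0 \<union> X) \<inter> D" "E0' = (E0' \<union> X') - D" "X' = (E0' \<union> X') \<inter> D"
      unfolding \<Sigma>_def by auto
    then show "E0 = E0' \<and> X = X'" unfolding eq by simp
  qed
  ultimately have "card {E\<in>Pow U. \<Phi> E} = card \<Sigma>"
    by (simp add: card_image)
  also have "\<dots> = (\<Sum>E0\<in>Pow (U - D). card {X\<in>Pow D. \<Phi> (E0 \<union> X)})"
    unfolding \<Sigma>_def using assms(1) finite_subset[OF assms(2,1)] by (intro card_SigmaI) auto
  finally show ?thesis .
qed

lemma card_add_block_le:
  fixes q :: real
  assumes "finite U" "D \<subseteq> U" "determined_outside D \<Phi>"
    and "\<forall>E\<subseteq>U. \<Phi> E \<longrightarrow> card {X\<in>Pow D. \<Psi> (E - D \<union> X)} \<le> q * 2 ^ card D"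
  shows "card {E\<in>Pow U. \<Phi> E \<and> \<Psi> E} \<le> card {E\<in>Pow (U - D). \<Phi> E} * (q * 2 ^ card D)"
proof -
  define G where "G = {E0\<in>Pow (U - D). \<Phi> E0}"
  define fiber where "fiber E0 = {X\<in>Pow D. \<Psi> (E0 \<union> X)}" for E0
  have fiber_eq: "{X\<in>Pow D. \<Phi> (E0 \<union> X) \<and> \<Psi> (E0 \<union> X)} = (if E0 \<in> G then fiber E0 else {})"
    if "E0 \<in> Pow (U - D)" for E0
  proof -
    have "\<Phi> (E0 \<union> X) = \<Phi> E0" if "X \<subseteq> D" for X
      using assms(3) that by (rule determined_outside_Un)
    then show ?thesis using that unfolding G_def fiber_def by auto
  qed
  have card_fiber: "card (fiber E0) \<le> q * 2 ^ card D" if "E0 \<in> G" for E0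
  proof -
    have "E0 \<subseteq> U" "\<Phi> E0" "E0 - D = E0" using that unfolding G_def by auto
    then show ?thesis using assms(4) unfolding fiber_def by metis
  qed
  have "card {E\<in>Pow U. \<Phi> E \<and> \<Psi> E} = (\<Sum>E0\<in>Pow (U - D). card {X\<in>Pow D. \<Phi> (E0 \<union> X) \<and> \<Psi> (E0 \<union> X)})"
    using assms(1,2) by (rule card_Pow_eq_sum_fibers)
  also have "\<dots> = (\<Sum>E0\<in>Pow (U - D). if E0 \<in> G then card (fiber E0) else 0)"
    by (rule sum.cong[OF refl]) (subst fiber_eq; simp)
  also have "\<dots> = (\<Sum>E0\<in>{E0\<in>Pow (U - D). E0 \<in> G}. card (fiber E0))"
    using assms(1) by (intro sum.inter_filter[symmetric]) simp
  also have "{E0\<in>Pow (U - D). E0 \<in> G} = G"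
    unfolding G_def by blast
  finally have "real (card {E\<in>Pow U. \<Phi> E \<and> \<Psi> E}) \<le> (\<Sum>E0\<in>G. real (card (fiber E0)))"
    by (simp flip: of_nat_sum)
  also have "\<dots> \<le> (\<Sum>E0\<in>G. q * 2 ^ card D)"
    by (intro sum_mono card_fiber)
  finally show ?thesis unfolding G_def by simp
qed

text \<open>The counting form of independence: properties of disjoint blocks of coordinates multiply.\<close>
lemma card_local_events_le:
  fixes q :: real
  assumes "finite I" "finite U" "0 \<le> q"
    and "\<forall>i\<in>I. D i \<subseteq> U" "disjoint_family_on D I"
    and "\<forall>i\<in>I. determined_outside (\<Union>j\<in>I - {i}. D j) (P i)"
    and "determined_outside (\<Union>i\<in>I. D i) Q"
    and "\<forall>i\<in>I. \<forall>E\<subseteq>U. Q E \<longrightarrow> card {X\<in>Pow (D i). P i (E - D i \<union> X)} \<le> q * 2 ^ card (D i)"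
  shows "card {E\<in>Pow U. Q E \<and> (\<forall>i\<in>I. P i E)} \<le> q ^ card I * 2 ^ card U"
  using assms
proof (induction I arbitrary: U rule: finite_induct)
  case empty
  have "card {E\<in>Pow U. Q E} \<le> card (Pow U)"
    using empty.prems(1) by (intro card_mono) auto
  then show ?case using empty.prems(1) by (simp add: card_Pow)
next
  case (insert i J U)
  define U' where "U' = U - D i"
  have Di: "D i \<subseteq> U" using insert.prems(3) by simp
  have "determined_outside (D i) Q" "\<forall>j\<in>J. determined_outside (D i) (P j)"
    using insert.prems(5,6) insert.hyps(2) by (auto elim!: determined_outside_mono)
  then have "determined_outside (D i) (\<lambda>E. Q E \<and> (\<forall>j\<in>J. P j E))"
    unfolding determined_outside_def by blast
  then have "card {E\<in>Pow U. (Q E \<and> (\<forall>j\<in>J. P j E)) \<and> P i E}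
      \<le> card {E\<in>Pow U'. Q E \<and> (\<forall>j\<in>J. P j E)} * (q * 2 ^ card (D i))"
    unfolding U'_def using insert.prems(1,7) Di by (intro card_add_block_le) auto
  also have "\<dots> \<le> q ^ card J * 2 ^ card U' * (q * 2 ^ card (D i))"
  proof (intro mult_right_mono insert.IH)
    show "\<forall>j\<in>J. D j \<subseteq> U'"
    proof
      fix j assume "j \<in> J"
      then have "D j \<inter> D i = {}" "D j \<subseteq> U"
        using insert.prems(3,4) insert.hyps(2) unfolding disjoint_family_on_def by auto
      then show "D j \<subseteq> U'" unfolding U'_def by blast
    qed
    show "\<forall>j\<in>J. determined_outside (\<Union>l\<in>J - {j}. D l) (P j)"
      using insert.prems(5) by (blast intro: determined_outside_mono)
    show "determined_outside (\<Union>j\<in>J. D j) Q"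
      using insert.prems(6) by (blast intro: determined_outside_mono)
    show "disjoint_family_on D J"
      using insert.prems(4) by (rule disjoint_family_on_mono[rotated]) blast
    show "\<forall>j\<in>J. \<forall>E\<subseteq>U'. Q E \<longrightarrow> card {X\<in>Pow (D j). P j (E - D j \<union> X)} \<le> q * 2 ^ card (D j)"
      using insert.prems(7) unfolding U'_def by blast
  qed (use insert.prems U'_def in auto)
  also have "\<dots> = q ^ Suc (card J) * 2 ^ (card U' + card (D i))"
    by (simp add: power_add algebra_simps)
  also have "card U' + card (D i) = card U"
    using Di insert.prems(1) unfolding U'_def by (simp add: card_Diff_subset card_mono finite_subset)
  also have "Suc (card J) = card (insert i J)"
    using insert.hyps by simp
  finally show ?case by (simp add: conj_ac)
qed

lemma card_completable_ge:
  assumes "finite D" "R \<subseteq> D" and compl: "\<forall>Y\<subseteq>D - R. \<exists>Y'\<subseteq>R. P (Y \<union> Y')"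
  shows "2 ^ (card D - card R) \<le> card {X\<in>Pow D. P X}"
proof -
  obtain g where g: "\<forall>Y\<subseteq>D - R. g Y \<subseteq> R \<and> P (Y \<union> g Y)"
    using compl by metis
  have "inj_on (\<lambda>Y. Y \<union> g Y) (Pow (D - R))"
  proof (rule inj_onI)
    fix Y1 Y2 assume "Y1 \<in> Pow (D - R)" "Y2 \<in> Pow (D - R)" "Y1 \<union> g Y1 = Y2 \<union> g Y2"
    then have "(Y1 \<union> g Y1) - R = (Y2 \<union> g Y2) - R" by simp
    then show "Y1 = Y2" using \<open>Y1 \<in> Pow (D - R)\<close> \<open>Y2 \<in> Pow (D - R)\<close> g by blast
  qed
  moreover have "(\<lambda>Y. Y \<union> g Y) ` Pow (D - R) \<subseteq> {X\<in>Pow D. P X}"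
    using g assms(2) by auto
  ultimately have "card (Pow (D - R)) \<le> card {X\<in>Pow D. P X}"
    using assms(1) by (intro card_inj_on_le) auto
  then show ?thesis
    using assms(1,2) by (simp add: card_Pow card_Diff_subset finite_subset)
qed

lemma card_failing_subsets_le:
  assumes "finite D" "R \<subseteq> D" "card R \<le> m" and "\<forall>Y\<subseteq>D - R. \<exists>Y'\<subseteq>R. P (Y \<union> Y')"
  shows "card {X\<in>Pow D. \<not> P X} \<le> (1 - 1 / 2 ^ m) * 2 ^ card D"
proof -
  have "card {X\<in>Pow D. \<not> P X} = card (Pow D - {X\<in>Pow D. P X})"
    by (rule arg_cong[where f = card]) blast
  also have "\<dots> = 2 ^ card D - card {X\<in>Pow D. P X}"
    using assms(1) by (subst card_Diff_subset) (auto simp: card_Pow)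
  finally have "card {X\<in>Pow D. \<not> P X} = 2 ^ card D - card {X\<in>Pow D. P X}" .
  moreover have "card {X\<in>Pow D. P X} \<le> card (Pow D)"
    using assms(1) by (intro card_mono) auto
  ultimately have "real (card {X\<in>Pow D. \<not> P X}) = 2 ^ card D - real (card {X\<in>Pow D. P X})"
    using assms(1) by (simp add: of_nat_diff card_Pow)
  also have "\<dots> \<le> 2 ^ card D - 2 ^ (card D - card R)"
    using card_completable_ge[OF assms(1,2,4)] by (simp add: of_nat_le_iff[symmetric])
  also have "\<dots> \<le> 2 ^ card D - 2 ^ card D / 2 ^ m"
  proof -
    have "(2::real) ^ card D \<le> 2 ^ (card D - card R) * 2 ^ m"
      using assms(3) by (simp flip: power_add)
    then show ?thesis by (simp add: divide_le_eq)
  qed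
  finally show ?thesis by (simp add: algebra_simps)
qed

lemma card_UN_le_card_mult:
  fixes b :: real
  assumes "finite I" "\<forall>i\<in>I. real (card (A i)) \<le> b"
  shows "real (card (\<Union>i\<in>I. A i)) \<le> card I * b"
proof -
  have "real (card (\<Union>i\<in>I. A i)) \<le> (\<Sum>i\<in>I. real (card (A i)))"
    using card_UN_le[OF assms(1), of A] by (simp flip: of_nat_sum)
  also have "\<dots> \<le> (\<Sum>i\<in>I. b)"
    using assms(2) by (intro sum_mono) blast
  finally show ?thesis by simp
qed

section \<open>Neighbourhood types and realizers\<close>

definition vertex_pairs :: "nat \<Rightarrow> nat set set" where
  "vertex_pairs n = {e. e \<subseteq> {..<n} \<and> card e = 2}"

definition star :: "nat \<Rightarrow> nat set \<Rightarrow> nat set set" where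
  "star v B = (\<lambda>b. {v, b}) ` B"

definition nbrs_in :: "nat set set \<Rightarrow> nat set \<Rightarrow> nat \<Rightarrow> nat set" where
  "nbrs_in E S w = {s\<in>S. {w, s} \<in> E}"

definition realizes :: "nat \<Rightarrow> nat set set \<Rightarrow> nat set \<Rightarrow> nat set set \<Rightarrow> nat \<Rightarrow> bool" where
  "realizes n E S \<C> v \<longleftrightarrow> (\<forall>C. C \<noteq> {} \<and> C \<subseteq> S \<longrightarrow> (C \<in> \<C> \<longleftrightarrow> odd (common_nbrs n E (insert v C))))"

definition has_all_types :: "nat set set \<Rightarrow> nat set \<Rightarrow> nat set \<Rightarrow> bool" where
  "has_all_types E S B \<longleftrightarrow> (\<forall>T. T \<noteq> {} \<and> T \<subseteq> S \<longrightarrow> (\<exists>w\<in>B. nbrs_in E S w = T))"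

lemma all_graphs_eq_Pow: "all_graphs n = Pow (vertex_pairs n)"
  unfolding all_graphs_def vertex_pairs_def ..

lemma finite_vertex_pairs: "finite (vertex_pairs n)"
  unfolding vertex_pairs_def by (rule finite_subset[of _ "Pow {..<n}"]) auto

lemma star_subset_vertex_pairs:
  assumes "v < n" "B \<subseteq> {..<n}" "v \<notin> B"
  shows "star v B \<subseteq> vertex_pairs n"
  using assms unfolding star_def vertex_pairs_def by (auto simp: card_2_iff)

lemma finite_star: "finite B \<Longrightarrow> finite (star v B)"
  unfolding star_def by simp

lemma card_star: "card (star v B) = card B"
  unfolding star_def by (rule card_image) (auto intro: inj_onI simp: doubleton_eq_iff)

lemma doubleton_in_star_iff: "{w, x} \<in> star v B \<longleftrightarrow> (w = v \<and> x \<in> B) \<or> (x = v \<and> w \<in> B)"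
  unfolding star_def by (auto simp: doubleton_eq_iff)

lemma disjoint_family_on_star:
  assumes "A \<inter> B = {}"
  shows "disjoint_family_on (\<lambda>v. star v B) A"
  using assms unfolding disjoint_family_on_def star_def by (auto simp: doubleton_eq_iff)

lemma nbrs_in_eq_if_Diff_eq:
  assumes "\<forall>s\<in>S. {w, s} \<notin> R" "E - R = E' - R"
  shows "nbrs_in E S w = nbrs_in E' S w"
  using assms unfolding nbrs_in_def by blast

lemma nbrs_in_Un_star:
  assumes "w \<notin> S" "X \<subseteq> star w S"
  shows "nbrs_in (E - star w S \<union> X) S w = nbrs_in X S w"
  using assms unfolding nbrs_in_def by (auto simp: doubleton_in_star_iff)

lemma nbrs_in_star:
  assumes "w \<notin> S" "T \<subseteq> S"
  shows "nbrs_in (star w T) S w = T"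
  using assms unfolding nbrs_in_def star_def by (auto simp: doubleton_eq_iff)

lemma star_nbrs_in:
  assumes "X \<subseteq> star w S"
  shows "star w (nbrs_in X S w) = X"
  using assms unfolding nbrs_in_def star_def by auto

lemma card_nbrs_in_neq:
  assumes "finite S" "w \<notin> S" "T \<subseteq> S"
  shows "card {X\<in>Pow (star w S). nbrs_in (E - star w S \<union> X) S w \<noteq> T} = 2 ^ card S - 1"
proof -
  have "nbrs_in (E - star w S \<union> X) S w \<noteq> T \<longleftrightarrow> X \<noteq> star w T" if "X \<subseteq> star w S" for X
    using that assms(2,3) star_nbrs_in[OF that] by (auto simp: nbrs_in_Un_star nbrs_in_star)
  then have "{X\<in>Pow (star w S). nbrs_in (E - star w S \<union> X) S w \<noteq> T} = Pow (star w S) - {star w T}"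
    by auto
  moreover have "star w T \<in> Pow (star w S)"
    using assms(3) unfolding star_def by auto
  ultimately show ?thesis
    using assms(1) by (simp add: card_Diff_singleton card_Pow finite_star card_star)
qed

lemma card_type_missing_le:
  assumes "S \<subseteq> {..<n}" "B \<subseteq> {..<n}" "S \<inter> B = {}" "T \<subseteq> S"
  shows "card {E\<in>all_graphs n. \<forall>w\<in>B. nbrs_in E S w \<noteq> T}
    \<le> (1 - 1 / 2 ^ card S) ^ card B * 2 ^ card (vertex_pairs n)"
proof -
  have fin: "finite S" "finite B" using finite_subset[OF assms(1)] finite_subset[OF assms(2)] by auto
  have "card {E\<in>Pow (vertex_pairs n). True \<and> (\<forall>w\<in>B. nbrs_in E S w \<noteq> T)}
    \<le> (1 - 1 / 2 ^ card S) ^ card B * 2 ^ card (vertex_pairs n)"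
  proof (rule card_local_events_le)
    show "\<forall>w\<in>B. star w S \<subseteq> vertex_pairs n"
      using assms(1-3) by (intro ballI star_subset_vertex_pairs) auto
    show "disjoint_family_on (\<lambda>w. star w S) B"
      using assms(3) by (intro disjoint_family_on_star) blast
    show "\<forall>w\<in>B. determined_outside (\<Union>w'\<in>B - {w}. star w' S) (\<lambda>E. nbrs_in E S w \<noteq> T)"
    proof
      fix w assume "w \<in> B"
      then have "\<forall>s\<in>S. {w, s} \<notin> (\<Union>w'\<in>B - {w}. star w' S)"
        using assms(3) by (auto simp: doubleton_in_star_iff)
      then show "determined_outside (\<Union>w'\<in>B - {w}. star w' S) (\<lambda>E. nbrs_in E S w \<noteq> T)"
        unfolding determined_outside_def by (metis nbrs_in_eq_if_Diff_eq)
    qed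
    show "\<forall>w\<in>B. \<forall>E\<subseteq>vertex_pairs n. True \<longrightarrow>
        real (card {X\<in>Pow (star w S). nbrs_in (E - star w S \<union> X) S w \<noteq> T}) \<le> (1 - 1 / 2 ^ card S) * 2 ^ card (star w S)"
    proof (intro ballI allI impI)
      fix w E assume "w \<in> B"
      then have "w \<notin> S" using assms(3) by blast
      then show "real (card {X\<in>Pow (star w S). nbrs_in (E - star w S \<union> X) S w \<noteq> T})
          \<le> (1 - 1 / 2 ^ card S) * 2 ^ card (star w S)"
        unfolding card_nbrs_in_neq[OF fin(1) \<open>w \<notin> S\<close> assms(4)] card_star
        by (simp add: of_nat_diff field_simps)
    qed
  qed (use fin finite_vertex_pairs determined_outside_def in auto)
  then show ?thesis by (simp add: all_graphs_eq_Pow)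
qed

lemma realizes_eq_if_Diff_eq:
  assumes "\<forall>x\<in>insert v S. \<forall>w. {w, x} \<notin> R" "E - R = E' - R"
  shows "realizes n E S \<C> v = realizes n E' S \<C> v"
proof -
  have edge: "{w, x} \<in> E \<longleftrightarrow> {w, x} \<in> E'" if "x \<in> insert v S" for w x
    using assms that by blast
  have "common_nbrs n E (insert v C) = common_nbrs n E' (insert v C)" if "C \<subseteq> S" for C
    unfolding common_nbrs_def using that by (metis (no_types, lifting) edge insert_mono subsetD)
  then show ?thesis unfolding realizes_def by auto
qed

lemma has_all_types_eq_if_Diff_eq:
  assumes "\<forall>w\<in>B. \<forall>s\<in>S. {w, s} \<notin> R" "E - R = E' - R"
  shows "has_all_types E S B = has_all_types E' S B"
proof -
  have "nbrs_in E S w = nbrs_in E' S w" if "w \<in> B" for w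
    using assms that by (intro nbrs_in_eq_if_Diff_eq) auto
  then show ?thesis unfolding has_all_types_def by auto
qed

context
  fixes n :: nat and E :: "nat set set" and S :: "nat set" and v :: nat
    and \<N> :: "nat set set" and rep :: "nat set \<Rightarrow> nat"
  assumes rep: "\<forall>T\<in>\<N>. rep T < n \<and> nbrs_in E S (rep T) = T"
    and v_notin: "v \<notin> S" "v \<notin> rep ` \<N>"
    and S_reps_disjoint: "S \<inter> rep ` \<N> = {}"
    and no_rep_edges: "E \<inter> star v (rep ` \<N>) = {}"
begin

lemma rep_inj: "inj_on rep \<N>"
  by (rule inj_onI) (metis rep)

lemma edge_Un_star_iff_non_rep:
  assumes "w \<notin> rep ` \<N>" "x \<in> insert v S" "\<T> \<subseteq> \<N>"
  shows "{w, x} \<in> E \<union> star v (rep ` \<T>) \<longleftrightarrow> {w, x} \<in> E"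
proof -
  have "x \<notin> rep ` \<T>" "w \<notin> rep ` \<T>"
    using assms v_notin S_reps_disjoint by blast+
  then show ?thesis by (auto simp: doubleton_in_star_iff)
qed

lemma adjacent_Un_star_rep_iff:
  assumes T: "T \<in> \<N>" and "\<T> \<subseteq> \<N>" "C \<subseteq> S"
  shows "(\<forall>x\<in>insert v C. {rep T, x} \<in> E \<union> star v (rep ` \<T>)) \<longleftrightarrow> T \<in> \<T> \<and> C \<subseteq> T"
proof -
  have "rep T \<noteq> v" using T v_notin by blast
  have "rep T \<in> rep ` \<T> \<longleftrightarrow> T \<in> \<T>"
    using assms rep_inj by (simp add: inj_on_image_mem_iff)
  then have "{rep T, v} \<in> E \<union> star v (rep ` \<T>) \<longleftrightarrow> T \<in> \<T>"
    using no_rep_edges T \<open>rep T \<noteq> v\<close> by (auto simp: doubleton_in_star_iff)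
  moreover have "{rep T, c} \<in> E \<union> star v (rep ` \<T>) \<longleftrightarrow> c \<in> T" if "c \<in> C" for c
  proof -
    have "c \<noteq> v" using that assms(3) v_notin by auto
    then have "{rep T, c} \<in> E \<union> star v (rep ` \<T>) \<longleftrightarrow> {rep T, c} \<in> E"
      using \<open>rep T \<noteq> v\<close> by (auto simp: doubleton_in_star_iff)
    also have "\<dots> \<longleftrightarrow> c \<in> T"
      using rep T that assms(3) unfolding nbrs_in_def by auto
    finally show ?thesis .
  qed
  ultimately show ?thesis by auto
qed

lemma common_nbrs_Un_star:
  assumes \<T>: "\<T> \<subseteq> \<N>" and C: "C \<subseteq> S"
  shows "common_nbrs n (E \<union> star v (rep ` \<T>)) (insert v C)
    = card {w\<in>{..<n}. w \<notin> rep ` \<N> \<and> (\<forall>x\<in>insert v C. {w, x} \<in> E)} + card {T\<in>\<T>. C \<subseteq> T}"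
proof -
  define E' where "E' = E \<union> star v (rep ` \<T>)"
  have rep_lt: "rep T < n" if "T \<in> \<N>" for T
    using rep that by blast
  have "{w\<in>{..<n}. \<forall>x\<in>insert v C. {w, x} \<in> E'}
      = {w\<in>{..<n}. w \<notin> rep ` \<N> \<and> (\<forall>x\<in>insert v C. {w, x} \<in> E)} \<union> rep ` {T\<in>\<T>. C \<subseteq> T}"
  proof (intro set_eqI iffI)
    fix w assume w: "w \<in> {w\<in>{..<n}. \<forall>x\<in>insert v C. {w, x} \<in> E'}"
    show "w \<in> {w\<in>{..<n}. w \<notin> rep ` \<N> \<and> (\<forall>x\<in>insert v C. {w, x} \<in> E)} \<union> rep ` {T\<in>\<T>. C \<subseteq> T}"
    proof (cases "w \<in> rep ` \<N>")
      case True
      then obtain T where "T \<in> \<N>" "w = rep T" by blast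
      then show ?thesis using w adjacent_Un_star_rep_iff[OF _ \<T> C] unfolding E'_def by auto
    next
      case False
      have "{w, x} \<in> E" if "x \<in> insert v C" for x
        using w that C edge_Un_star_iff_non_rep[OF False, of x \<T>] \<T> unfolding E'_def by auto
      then show ?thesis using w False by auto
    qed
  next
    fix w assume "w \<in> {w\<in>{..<n}. w \<notin> rep ` \<N> \<and> (\<forall>x\<in>insert v C. {w, x} \<in> E)} \<union> rep ` {T\<in>\<T>. C \<subseteq> T}"
    then show "w \<in> {w\<in>{..<n}. \<forall>x\<in>insert v C. {w, x} \<in> E'}"
    proof
      assume "w \<in> rep ` {T\<in>\<T>. C \<subseteq> T}"
      then obtain T where "T \<in> \<T>" "C \<subseteq> T" "w = rep T" by blast
      then show ?thesis using adjacent_Un_star_rep_iff[OF _ \<T> C] rep_lt \<T> unfolding E'_def by auto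
    next
      assume w: "w \<in> {w\<in>{..<n}. w \<notin> rep ` \<N> \<and> (\<forall>x\<in>insert v C. {w, x} \<in> E)}"
      have "{w, x} \<in> E'" if "x \<in> insert v C" for x
        using w that C edge_Un_star_iff_non_rep[of w x \<T>] \<T> unfolding E'_def by auto
      then show ?thesis using w by auto
    qed
  qed
  moreover have "card (rep ` {T\<in>\<T>. C \<subseteq> T}) = card {T\<in>\<T>. C \<subseteq> T}"
    using \<T> by (intro card_image inj_on_subset[OF rep_inj]) auto
  moreover have "finite (rep ` {T\<in>\<T>. C \<subseteq> T})"
    using rep_lt \<T> by (auto intro: finite_subset[of _ "{..<n}"])
  moreover have "{w\<in>{..<n}. w \<notin> rep ` \<N> \<and> (\<forall>x\<in>insert v C. {w, x} \<in> E)} \<inter> rep ` {T\<in>\<T>. C \<subseteq> T} = {}"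
    using \<T> by blast
  ultimately show ?thesis
    unfolding common_nbrs_def E'_def[symmetric] by (simp add: card_Un_disjoint)
qed

lemma exists_realizing_extension:
  assumes "finite S" and \<N>: "\<N> = {T. T \<noteq> {} \<and> T \<subseteq> S}"
  shows "\<exists>\<T>\<subseteq>\<N>. realizes n (E \<union> star v (rep ` \<T>)) S \<C> v"
proof -
  define a where "a C = card {w\<in>{..<n}. w \<notin> rep ` \<N> \<and> (\<forall>x\<in>insert v C. {w, x} \<in> E)}" for C
  obtain \<T> where \<T>: "\<T> \<subseteq> \<N>"
    and sol: "\<forall>C. C \<noteq> {} \<and> C \<subseteq> S \<longrightarrow> (C \<in> \<C> \<longleftrightarrow> odd (a C + card {T\<in>\<T>. C \<subseteq> T}))"
    using parity_system_solvable[OF assms(1), of \<C> a] unfolding \<N> by blast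
  have "common_nbrs n (E \<union> star v (rep ` \<T>)) (insert v C) = a C + card {T\<in>\<T>. C \<subseteq> T}"
    if "C \<subseteq> S" for C
    unfolding a_def using common_nbrs_Un_star[OF \<T> that] .
  then show ?thesis
    using \<T> sol unfolding realizes_def by auto
qed

end

lemma exists_realizing_completion:
  assumes fin: "finite S" and B: "B \<subseteq> {..<n}" and v: "v \<notin> S" "v \<notin> B" and SB: "S \<inter> B = {}"
    and rep: "\<forall>T\<in>\<N>. rep T \<in> B \<and> nbrs_in E S (rep T) = T" and \<N>: "\<N> = {T. T \<noteq> {} \<and> T \<subseteq> S}"
    and Y: "Y \<subseteq> star v B - star v (rep ` \<N>)"
  shows "\<exists>Y'\<subseteq>star v (rep ` \<N>). realizes n (E - star v B \<union> (Y \<union> Y')) S \<C> v"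
proof -
  define E' where "E' = E - star v B \<union> Y"
  have RB: "rep ` \<N> \<subseteq> B" using rep by blast
  have diff: "E' - star v B = E - star v B"
    using Y unfolding E'_def by blast
  have "rep T < n \<and> nbrs_in E' S (rep T) = T" if "T \<in> \<N>" for T
  proof -
    have "rep T \<in> B" "nbrs_in E S (rep T) = T" using rep that by blast+
    moreover have "\<forall>s\<in>S. {rep T, s} \<notin> star v B"
      using \<open>rep T \<in> B\<close> v SB by (auto simp: doubleton_in_star_iff)
    then have "nbrs_in E' S (rep T) = nbrs_in E S (rep T)"
      by (rule nbrs_in_eq_if_Diff_eq[OF _ diff])
    ultimately show ?thesis using B by auto
  qed
  then have rep': "\<forall>T\<in>\<N>. rep T < n \<and> nbrs_in E' S (rep T) = T" ..
  have E'_R: "E' \<inter> star v (rep ` \<N>) = {}"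
    using Y RB unfolding E'_def star_def by blast
  have v_R: "v \<notin> rep ` \<N>" and S_R: "S \<inter> rep ` \<N> = {}"
    using RB v(2) SB by blast+
  obtain \<T> where "\<T> \<subseteq> \<N>" "realizes n (E' \<union> star v (rep ` \<T>)) S \<C> v"
    using exists_realizing_extension[OF rep' v(1) v_R S_R E'_R fin \<N>] by blast
  moreover have "star v (rep ` \<T>) \<subseteq> star v (rep ` \<N>)"
    using \<open>\<T> \<subseteq> \<N>\<close> unfolding star_def by blast
  moreover have "E - star v B \<union> (Y \<union> star v (rep ` \<T>)) = E' \<union> star v (rep ` \<T>)"
    unfolding E'_def by blast
  ultimately show ?thesis by auto
qed

text \<open>Whatever the other edges at \<open>v\<close> are, its edges to one representative of each type
  can be chosen to make it a realizer.\<close>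
lemma card_not_realizing_le:
  assumes S: "S \<subseteq> {..<n}" and B: "B \<subseteq> {..<n}" and v: "v \<notin> S" "v \<notin> B" and SB: "S \<inter> B = {}"
    and types: "has_all_types E S B"
  shows "card {X\<in>Pow (star v B). \<not> realizes n (E - star v B \<union> X) S \<C> v}
    \<le> (1 - 1 / 2 ^ 2 ^ card S) * 2 ^ card (star v B)"
proof -
  define \<N> where "\<N> = {T. T \<noteq> {} \<and> T \<subseteq> S}"
  have "\<forall>T\<in>\<N>. \<exists>w. w \<in> B \<and> nbrs_in E S w = T"
    using types unfolding has_all_types_def \<N>_def by blast
  then obtain rep where rep: "\<forall>T\<in>\<N>. rep T \<in> B \<and> nbrs_in E S (rep T) = T"
    by metis
  have fin: "finite S" "finite B" using finite_subset[OF S] finite_subset[OF B] by auto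
  have "card (star v (rep ` \<N>)) \<le> card \<N>"
    unfolding card_star using fin(1) by (intro card_image_le) (simp add: \<N>_def)
  also have "\<dots> \<le> 2 ^ card S"
    using fin(1) unfolding \<N>_def by (simp add: card_nonempty_subsets)
  finally have "card (star v (rep ` \<N>)) \<le> 2 ^ card S" .
  moreover have "star v (rep ` \<N>) \<subseteq> star v B"
    using rep unfolding star_def by blast
  ultimately show ?thesis
    using fin(2) exists_realizing_completion[OF fin(1) B v SB rep \<N>_def]
    by (intro card_failing_subsets_le[where R = "star v (rep ` \<N>)"]) (auto simp: finite_star)
qed

lemma card_no_realizer_le:
  assumes S: "S \<subseteq> {..<n}" and A: "A \<subseteq> {..<n}" and B: "B \<subseteq> {..<n}"
    and disj: "S \<inter> A = {}" "S \<inter> B = {}" "A \<inter> B = {}"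
  shows "card {E\<in>all_graphs n. has_all_types E S B \<and> (\<forall>v\<in>A. \<not> realizes n E S \<C> v)}
    \<le> (1 - 1 / 2 ^ 2 ^ card S) ^ card A * 2 ^ card (vertex_pairs n)"
  unfolding all_graphs_eq_Pow
proof (rule card_local_events_le)
  show "finite A" using A by (rule finite_subset) simp
  show "\<forall>v\<in>A. star v B \<subseteq> vertex_pairs n"
    using A B disj(3) by (intro ballI star_subset_vertex_pairs) auto
  show "disjoint_family_on (\<lambda>v. star v B) A"
    using disj(3) by (rule disjoint_family_on_star)
  show "\<forall>v\<in>A. determined_outside (\<Union>v'\<in>A - {v}. star v' B) (\<lambda>E. \<not> realizes n E S \<C> v)"
  proof
    fix v assume "v \<in> A"
    then have "\<forall>x\<in>insert v S. \<forall>w. {w, x} \<notin> (\<Union>v'\<in>A - {v}. star v' B)"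
      using disj by (auto simp: doubleton_in_star_iff)
    then show "determined_outside (\<Union>v'\<in>A - {v}. star v' B) (\<lambda>E. \<not> realizes n E S \<C> v)"
      unfolding determined_outside_def by (metis realizes_eq_if_Diff_eq)
  qed
  have "\<forall>w\<in>B. \<forall>s\<in>S. {w, s} \<notin> (\<Union>v\<in>A. star v B)"
    using disj by (auto simp: doubleton_in_star_iff)
  then show "determined_outside (\<Union>v\<in>A. star v B) (\<lambda>E. has_all_types E S B)"
    unfolding determined_outside_def by (metis has_all_types_eq_if_Diff_eq)
  show "\<forall>v\<in>A. \<forall>E\<subseteq>vertex_pairs n. has_all_types E S B \<longrightarrow>
      real (card {X\<in>Pow (star v B). \<not> realizes n (E - star v B \<union> X) S \<C> v})
        \<le> (1 - 1 / 2 ^ 2 ^ card S) * 2 ^ card (star v B)"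
  proof (intro ballI allI impI)
    fix v E assume "v \<in> A" "has_all_types E S B"
    moreover have "v \<notin> S" "v \<notin> B" using \<open>v \<in> A\<close> disj by blast+
    ultimately show "real (card {X\<in>Pow (star v B). \<not> realizes n (E - star v B \<union> X) S \<C> v})
        \<le> (1 - 1 / 2 ^ 2 ^ card S) * 2 ^ card (star v B)"
      using card_not_realizing_le[OF S B _ _ disj(2)] by blast
  qed
qed (simp_all add: finite_vertex_pairs)

section \<open>The union bound\<close>

lemma unrealized_family_subset:
  "{E\<in>all_graphs n. \<exists>\<C>\<subseteq>{C. C \<noteq> {} \<and> C \<subseteq> S}. \<forall>v\<in>A. \<not> realizes n E S \<C> v}
    \<subseteq> (\<Union>T\<in>{T. T \<noteq> {} \<and> T \<subseteq> S}. {E\<in>all_graphs n. \<forall>w\<in>B. nbrs_in E S w \<noteq> T})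
      \<union> (\<Union>\<C>\<in>Pow {C. C \<noteq> {} \<and> C \<subseteq> S}.
           {E\<in>all_graphs n. has_all_types E S B \<and> (\<forall>v\<in>A. \<not> realizes n E S \<C> v)})"
proof
  fix E assume E: "E \<in> {E\<in>all_graphs n. \<exists>\<C>\<subseteq>{C. C \<noteq> {} \<and> C \<subseteq> S}. \<forall>v\<in>A. \<not> realizes n E S \<C> v}"
  show "E \<in> (\<Union>T\<in>{T. T \<noteq> {} \<and> T \<subseteq> S}. {E\<in>all_graphs n. \<forall>w\<in>B. nbrs_in E S w \<noteq> T})
      \<union> (\<Union>\<C>\<in>Pow {C. C \<noteq> {} \<and> C \<subseteq> S}.
           {E\<in>all_graphs n. has_all_types E S B \<and> (\<forall>v\<in>A. \<not> realizes n E S \<C> v)})"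
  proof (cases "has_all_types E S B")
    case True
    then show ?thesis using E by blast
  next
    case False
    then obtain T where "T \<noteq> {}" "T \<subseteq> S" "\<forall>w\<in>B. nbrs_in E S w \<noteq> T"
      unfolding has_all_types_def by blast
    then show ?thesis using E by blast
  qed
qed

lemma card_unrealized_family_split_le:
  assumes S: "S \<subseteq> {..<n}" "card S = k" and A: "A \<subseteq> {..<n}" and B: "B \<subseteq> {..<n}"
    and disj: "S \<inter> A = {}" "S \<inter> B = {}" "A \<inter> B = {}"
  shows "card {E\<in>all_graphs n. \<exists>\<C>\<subseteq>{C. C \<noteq> {} \<and> C \<subseteq> S}. \<forall>v\<in>A. \<not> realizes n E S \<C> v}
    \<le> (2 ^ k * (1 - 1 / 2 ^ k) ^ card B + 2 ^ 2 ^ k * (1 - 1 / 2 ^ 2 ^ k) ^ card A)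
        * 2 ^ card (vertex_pairs n)"
proof -
  define \<N> where "\<N> = {C. C \<noteq> {} \<and> C \<subseteq> S}"
  define missing where "missing T = {E\<in>all_graphs n. \<forall>w\<in>B. nbrs_in E S w \<noteq> T}" for T
  define unrealized where
    "unrealized \<C> = {E\<in>all_graphs n. has_all_types E S B \<and> (\<forall>v\<in>A. \<not> realizes n E S \<C> v)}" for \<C>
  have fin: "finite S" using finite_subset[OF S(1)] by simp
  then have fin_\<N>: "finite \<N>" and card_\<N>: "card \<N> \<le> 2 ^ k"
    unfolding \<N>_def using S(2) by (simp_all add: card_nonempty_subsets)
  have graphs: "finite (all_graphs n)"
    by (simp add: all_graphs_eq_Pow finite_vertex_pairs)
  have "{E\<in>all_graphs n. \<exists>\<C>\<subseteq>\<N>. \<forall>v\<in>A. \<not> realizes n E S \<C> v}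
      \<subseteq> (\<Union>T\<in>\<N>. missing T) \<union> (\<Union>\<C>\<in>Pow \<N>. unrealized \<C>)"
    unfolding \<N>_def missing_def unrealized_def by (rule unrealized_family_subset)
  moreover have "(\<Union>T\<in>\<N>. missing T) \<union> (\<Union>\<C>\<in>Pow \<N>. unrealized \<C>) \<subseteq> all_graphs n"
    unfolding missing_def unrealized_def by blast
  ultimately have "card {E\<in>all_graphs n. \<exists>\<C>\<subseteq>\<N>. \<forall>v\<in>A. \<not> realizes n E S \<C> v}
      \<le> card (\<Union>T\<in>\<N>. missing T) + card (\<Union>\<C>\<in>Pow \<N>. unrealized \<C>)"
    using graphs card_Un_le[of "\<Union>T\<in>\<N>. missing T" "\<Union>\<C>\<in>Pow \<N>. unrealized \<C>"]
    by (meson card_mono finite_subset le_trans)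
  then have "real (card {E\<in>all_graphs n. \<exists>\<C>\<subseteq>\<N>. \<forall>v\<in>A. \<not> realizes n E S \<C> v})
      \<le> real (card (\<Union>T\<in>\<N>. missing T)) + real (card (\<Union>\<C>\<in>Pow \<N>. unrealized \<C>))"
    by linarith
  also have "\<dots> \<le> card \<N> * ((1 - 1 / 2 ^ k) ^ card B * 2 ^ card (vertex_pairs n))
      + card (Pow \<N>) * ((1 - 1 / 2 ^ 2 ^ k) ^ card A * 2 ^ card (vertex_pairs n))"
  proof (intro add_mono card_UN_le_card_mult ballI)
    fix T assume "T \<in> \<N>"
    then show "real (card (missing T)) \<le> (1 - 1 / 2 ^ k) ^ card B * 2 ^ card (vertex_pairs n)"
      unfolding missing_def \<N>_def using card_type_missing_le[OF S(1) B disj(2)] S(2) by auto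
  next
    fix \<C> assume "\<C> \<in> Pow \<N>"
    show "real (card (unrealized \<C>)) \<le> (1 - 1 / 2 ^ 2 ^ k) ^ card A * 2 ^ card (vertex_pairs n)"
      unfolding unrealized_def using card_no_realizer_le[OF S(1) A B disj] S(2) by simp
  qed (use fin_\<N> in auto)
  also have "\<dots> \<le> 2 ^ k * ((1 - 1 / 2 ^ k) ^ card B * 2 ^ card (vertex_pairs n))
      + 2 ^ 2 ^ k * ((1 - 1 / 2 ^ 2 ^ k) ^ card A * 2 ^ card (vertex_pairs n))"
    using card_\<N> fin_\<N> by (intro add_mono mult_right_mono) (auto simp: card_Pow)
  finally show ?thesis unfolding \<N>_def by (simp add: algebra_simps)
qed

lemma power_one_minus_inverse_le:
  assumes "m \<le> b"
  shows "(1 - 1 / 2 ^ k :: real) ^ b \<le> (1 - 1 / 2 ^ 2 ^ k) ^ m"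
proof -
  have "(1 - 1 / 2 ^ k :: real) ^ b \<le> (1 - 1 / 2 ^ k) ^ m"
    using assms by (intro power_decreasing) auto
  also have "\<dots> \<le> (1 - 1 / 2 ^ 2 ^ k) ^ m"
  proof (rule power_mono)
    have "(2::real) ^ k \<le> 2 ^ 2 ^ k" by (rule power_increasing) (simp_all add: less_imp_le)
    then show "1 - 1 / 2 ^ k \<le> (1 - 1 / 2 ^ 2 ^ k :: real)" by (simp add: frac_le)
  qed simp
  finally show ?thesis .
qed

lemma card_unrealized_family_le:
  assumes S: "S \<subseteq> {..<n}" "card S = k"
  shows "card {E\<in>all_graphs n. \<exists>\<C>\<subseteq>{C. C \<noteq> {} \<and> C \<subseteq> S}. \<forall>v\<in>{..<n} - S. \<not> realizes n E S \<C> v}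
    \<le> (2 ^ k + 2 ^ 2 ^ k) * (1 - 1 / 2 ^ 2 ^ k) ^ ((n - k) div 2) * 2 ^ card (vertex_pairs n)"
proof -
  define m where "m = (n - k) div 2"
  define \<rho> :: real where "\<rho> = 1 - 1 / 2 ^ 2 ^ k"
  have card_rest: "card ({..<n} - S) = n - k"
    using S by (simp add: card_Diff_subset finite_subset)
  moreover have "m \<le> n - k" unfolding m_def by simp
  ultimately obtain A where A: "A \<subseteq> {..<n} - S" "card A = m"
    by (metis obtain_subset_with_card_n)
  define B where "B = {..<n} - S - A"
  have "card B = (n - k) - m"
    unfolding B_def using A card_rest by (simp add: card_Diff_subset finite_subset)
  then have "m \<le> card B" unfolding m_def by simp
  then have power_B: "(1 - 1 / 2 ^ k :: real) ^ card B \<le> \<rho> ^ m"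
    unfolding \<rho>_def by (rule power_one_minus_inverse_le)
  have "{E\<in>all_graphs n. \<exists>\<C>\<subseteq>{C. C \<noteq> {} \<and> C \<subseteq> S}. \<forall>v\<in>{..<n} - S. \<not> realizes n E S \<C> v}
      \<subseteq> {E\<in>all_graphs n. \<exists>\<C>\<subseteq>{C. C \<noteq> {} \<and> C \<subseteq> S}. \<forall>v\<in>A. \<not> realizes n E S \<C> v}"
    using A(1) by blast
  then have "card {E\<in>all_graphs n. \<exists>\<C>\<subseteq>{C. C \<noteq> {} \<and> C \<subseteq> S}. \<forall>v\<in>{..<n} - S. \<not> realizes n E S \<C> v}
      \<le> card {E\<in>all_graphs n. \<exists>\<C>\<subseteq>{C. C \<noteq> {} \<and> C \<subseteq> S}. \<forall>v\<in>A. \<not> realizes n E S \<C> v}"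
    by (rule card_mono[rotated]) (simp add: all_graphs_eq_Pow finite_vertex_pairs)
  then have "real (card {E\<in>all_graphs n. \<exists>\<C>\<subseteq>{C. C \<noteq> {} \<and> C \<subseteq> S}. \<forall>v\<in>{..<n} - S. \<not> realizes n E S \<C> v})
      \<le> (2 ^ k * (1 - 1 / 2 ^ k) ^ card B + 2 ^ 2 ^ k * \<rho> ^ card A) * 2 ^ card (vertex_pairs n)"
    using card_unrealized_family_split_le[OF S, of A B] A(1) unfolding B_def \<rho>_def by force
  also have "\<dots> \<le> (2 ^ k * \<rho> ^ m + 2 ^ 2 ^ k * \<rho> ^ m) * 2 ^ card (vertex_pairs n)"
    using power_B A(2) by (intro mult_right_mono add_mono) auto
  finally show ?thesis unfolding \<rho>_def m_def by (simp add: algebra_simps)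
qed

lemma good_graph_iff_realizes:
  "good_graph k n E \<longleftrightarrow> (\<forall>S. S \<subseteq> {..<n} \<and> card S = k \<longrightarrow>
     (\<forall>\<C>\<subseteq>{C. C \<noteq> {} \<and> C \<subseteq> S}. \<exists>v\<in>{..<n} - S. realizes n E S \<C> v))"
  unfolding good_graph_def realizes_def by (simp add: Bex_def conj_commute)

lemma card_not_good_graph_le:
  "card {E\<in>all_graphs n. \<not> good_graph k n E}
    \<le> (n choose k) * ((2 ^ k + 2 ^ 2 ^ k) * (1 - 1 / 2 ^ 2 ^ k) ^ ((n - k) div 2) * 2 ^ card (vertex_pairs n))"
proof -
  define \<S> where "\<S> = {S. S \<subseteq> {..<n} \<and> card S = k}"
  define bad where
    "bad S = {E\<in>all_graphs n. \<exists>\<C>\<subseteq>{C. C \<noteq> {} \<and> C \<subseteq> S}. \<forall>v\<in>{..<n} - S. \<not> realizes n E S \<C> v}" for S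
  have "{E\<in>all_graphs n. \<not> good_graph k n E} = (\<Union>S\<in>\<S>. bad S)"
    unfolding good_graph_iff_realizes \<S>_def bad_def by blast
  moreover have "finite \<S>"
    unfolding \<S>_def by (rule finite_subset[of _ "Pow {..<n}"]) auto
  moreover have "\<forall>S\<in>\<S>. real (card (bad S))
      \<le> (2 ^ k + 2 ^ 2 ^ k) * (1 - 1 / 2 ^ 2 ^ k) ^ ((n - k) div 2) * 2 ^ card (vertex_pairs n)"
    unfolding \<S>_def bad_def using card_unrealized_family_le by blast
  moreover have "card \<S> = n choose k"
    unfolding \<S>_def using n_subsets[of "{..<n}" k] by simp
  ultimately show ?thesis
    using card_UN_le_card_mult by metis
qed

section \<open>Negligibility\<close>

lemma one_minus_prob_G_eq: "1 - prob_G n P = prob_G n (\<lambda>E. \<not> P E)"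
proof -
  have fin: "finite (all_graphs n)" by (simp add: all_graphs_eq_Pow finite_vertex_pairs)
  have "all_graphs n = {E\<in>all_graphs n. P E} \<union> {E\<in>all_graphs n. \<not> P E}" by blast
  then have "card (all_graphs n) = card {E\<in>all_graphs n. P E} + card {E\<in>all_graphs n. \<not> P E}"
    using fin by (metis (no_types, lifting) card_Un_disjoint disjoint_iff finite_Un mem_Collect_eq)
  then have split: "real (card {E\<in>all_graphs n. \<not> P E})
      = real (card (all_graphs n)) - real (card {E\<in>all_graphs n. P E})"
    by simp
  have "card (all_graphs n) > 0"
    using fin by (auto simp: card_gt_0_iff all_graphs_def)
  then show ?thesis
    unfolding prob_G_def split by (simp add: diff_divide_distrib)
qed

lemma tendsto_poly_times_geometric:
  fixes s :: real
  assumes "0 < s" "s < 1"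
  shows "(\<lambda>n. real n ^ j * s ^ n) \<longlonglongrightarrow> 0"
proof -
  define t where "t = - ln s"
  have t: "t > 0" unfolding t_def using assms by simp
  have "filterlim (\<lambda>n. t * real n) at_top sequentially"
    by (rule filterlim_tendsto_pos_mult_at_top[OF tendsto_const t filterlim_real_sequentially])
  then have "(\<lambda>n. (t * real n) ^ j / exp (t * real n) / t ^ j) \<longlonglongrightarrow> 0 / t ^ j"
    by (intro tendsto_divide filterlim_compose[OF tendsto_power_div_exp_0]) (use t in auto)
  moreover have "(t * real n) ^ j / exp (t * real n) / t ^ j = real n ^ j * s ^ n" for n
  proof -
    have "s ^ n = inverse (exp (t * real n))"
      using assms unfolding t_def by (simp add: exp_minus[symmetric] exp_of_nat_mult mult.commute)
    then show ?thesis using t by (simp add: power_mult_distrib field_simps)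
  qed
  ultimately show ?thesis by simp
qed

lemma negl_if_le_poly_times_geometric:
  fixes f :: "nat \<Rightarrow> real" and \<rho> c :: real
  assumes \<rho>: "0 < \<rho>" "\<rho> < 1" and "0 \<le> c"
    and f: "\<And>n. 0 \<le> f n" "\<And>n. f n \<le> c * real n ^ j * \<rho> ^ ((n - a) div 2)"
  shows "negl f"
  unfolding negl_def
proof
  fix d :: nat
  define \<sigma> where "\<sigma> = sqrt \<rho>"
  have \<sigma>: "0 < \<sigma>" "\<sigma> < 1" "\<sigma> ^ 2 = \<rho>"
    unfolding \<sigma>_def using \<rho> by (auto simp: real_sqrt_less_iff)
  define g where "g n = c / \<sigma> ^ (a + 1) * (real n ^ (j + d) * \<sigma> ^ n)" for n
  have "g \<longlonglongrightarrow> c / \<sigma> ^ (a + 1) * 0"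
    unfolding g_def using \<sigma> by (intro tendsto_mult tendsto_const tendsto_poly_times_geometric)
  then have "eventually (\<lambda>n. g n < 1) sequentially"
    by (rule order_tendstoD(2)) simp
  then show "eventually (\<lambda>n. \<bar>f n\<bar> < 1 / real n ^ d) sequentially"
    using eventually_ge_at_top[of "a + 1"]
  proof eventually_elim
    case (elim n)
    have "\<rho> ^ ((n - a) div 2) = \<sigma> ^ (2 * ((n - a) div 2))"
      using \<sigma>(3) by (simp add: power_mult)
    also have "\<dots> \<le> \<sigma> ^ (n - (a + 1))"
      using \<sigma> by (intro power_decreasing) auto
    also have "\<dots> = \<sigma> ^ n / \<sigma> ^ (a + 1)"
      using \<sigma>(1) elim(2) by (simp add: power_diff)
    finally have "c * real n ^ j * \<rho> ^ ((n - a) div 2) \<le> c * real n ^ j * (\<sigma> ^ n / \<sigma> ^ (a + 1))"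
      using \<open>0 \<le> c\<close> by (intro mult_left_mono) auto
    with f(2)[of n] have "f n \<le> c * real n ^ j * (\<sigma> ^ n / \<sigma> ^ (a + 1))"
      by linarith
    also have "\<dots> = g n / real n ^ d"
      using elim(2) unfolding g_def by (simp add: power_add field_simps)
    also have "\<dots> < 1 / real n ^ d"
      using elim by (simp add: divide_strict_right_mono)
    finally show ?case using f(1)[of n] by simp
  qed
qed

lemma one_minus_prob_good_graph_le:
  "1 - prob_G n (good_graph k n)
    \<le> (2 ^ k + 2 ^ 2 ^ k) * real n ^ k * (1 - 1 / 2 ^ 2 ^ k) ^ ((n - k) div 2)"
proof -
  have "1 - prob_G n (good_graph k n) = prob_G n (\<lambda>E. \<not> good_graph k n E)"
    by (rule one_minus_prob_G_eq)
  also have "\<dots> = real (card {E\<in>all_graphs n. \<not> good_graph k n E}) / 2 ^ card (vertex_pairs n)"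
    unfolding prob_G_def by (simp add: all_graphs_eq_Pow card_Pow finite_vertex_pairs)
  also have "\<dots> \<le> (n choose k) * ((2 ^ k + 2 ^ 2 ^ k) * (1 - 1 / 2 ^ 2 ^ k) ^ ((n - k) div 2))"
    using card_not_good_graph_le[of n k] by (simp add: divide_le_eq)
  also have "\<dots> \<le> real n ^ k * ((2 ^ k + 2 ^ 2 ^ k) * (1 - 1 / 2 ^ 2 ^ k) ^ ((n - k) div 2))"
  proof (rule mult_right_mono)
    have "(n choose k) * 1 \<le> (n choose k) * fact k"
      by (intro mult_le_mono2) simp
    then have "n choose k \<le> n ^ k"
      using binomial_fact_pow[of n k] by linarith
    then show "real (n choose k) \<le> real n ^ k"
      by (metis of_nat_le_iff of_nat_power)
  qed simp
  finally show ?thesis by (simp add: algebra_simps)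
qed

theorem mainTheorem14:
  fixes k :: nat
  assumes "k \<ge> 1"
  shows "negl (\<lambda>n. 1 - prob_G n (good_graph k n))"
proof (rule negl_if_le_poly_times_geometric
    [where \<rho> = "1 - 1 / 2 ^ 2 ^ k" and c = "2 ^ k + 2 ^ 2 ^ k" and j = k and a = k])
  show "0 \<le> 1 - prob_G n (good_graph k n)" for n
    by (subst one_minus_prob_G_eq) (simp add: prob_G_def)
  show "1 - prob_G n (good_graph k n)
      \<le> (2 ^ k + 2 ^ 2 ^ k) * real n ^ k * (1 - 1 / 2 ^ 2 ^ k) ^ ((n - k) div 2)" for n
    by (rule one_minus_prob_good_graph_le)
qed simp_all

end
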